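(* For $n\ge 3$ let $M^n$ be the $5$-ary $n\times n$ matrix with entries $M^n_{i,i}=0$ for $1\le i\le n$; $M^n_{i,i+1}=1$ for $1\le i\le n-1$; $M^n_{n,1}=1$; $M^n_{i,j}=3$ for $j\ge i+2$; $M^n_{i,1}=4$ for $2\le i\le n-1$; and $M^n_{i,j}=2$ for $2\le j\le i-1$. (For example $M^5$ has rows $(0,1,3,3,3),(4,0,1,3,3),(4,2,0,1,3),(4,2,2,0,1),(1,2,2,2,0)$.) Then $M^n$ is not a weak lonesum matrix, while every proper submatrix of $M^n$ (obtained by deleting at least one row or column) is a weak lonesum matrix.
   Context: A $q$-ary matrix has entries in $\{0,1,\ldots,q-1\}$. For a $q$-ary vector $v=(v_1,\ldots,v_n)$ its structure vector is $(a_0,a_1,\ldots,a_{q-1})$ where $a_k$ is the number of coordinates $i$ with $v_i=k$. A $q$-ary $m\times n$ matrix $M$ is a weak lonesum matrix if no other $q$-ary $m\times n$ matrix has the same structure vectors of all rows and of all columns as $M$. Here $q=5$. *)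

theory Defs
  imports Main
begin

text \<open>Matrices are functions nat => nat => nat, with 0-based indices; an m x n matrix
  is determined by its values at i < m, j < n.\<close>

definition qary_matrix :: "nat \<Rightarrow> nat \<Rightarrow> nat \<Rightarrow> (nat \<Rightarrow> nat \<Rightarrow> nat) \<Rightarrow> bool" where
  "qary_matrix q m n M \<longleftrightarrow> (\<forall>i<m. \<forall>j<n. M i j < q)"

definition struct_vec :: "nat \<Rightarrow> nat \<Rightarrow> (nat \<Rightarrow> nat) \<Rightarrow> nat list" where
  "struct_vec q n v = map (\<lambda>k. card {l. l < n \<and> v l = k}) [0..<q]"

definition row_struct :: "nat \<Rightarrow> nat \<Rightarrow> (nat \<Rightarrow> nat \<Rightarrow> nat) \<Rightarrow> nat \<Rightarrow> nat list" where
  "row_struct q n M i = struct_vec q n (\<lambda>j. M i j)"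

definition col_struct :: "nat \<Rightarrow> nat \<Rightarrow> (nat \<Rightarrow> nat \<Rightarrow> nat) \<Rightarrow> nat \<Rightarrow> nat list" where
  "col_struct q m M j = struct_vec q m (\<lambda>i. M i j)"

definition weak_lonesum :: "nat \<Rightarrow> nat \<Rightarrow> nat \<Rightarrow> (nat \<Rightarrow> nat \<Rightarrow> nat) \<Rightarrow> bool" where
  "weak_lonesum q m n M \<longleftrightarrow> qary_matrix q m n M \<and>
     (\<forall>N. qary_matrix q m n N
          \<and> (\<forall>i<m. row_struct q n N i = row_struct q n M i)
          \<and> (\<forall>j<n. col_struct q m N j = col_struct q m M j)
          \<longrightarrow> (\<forall>i<m. \<forall>j<n. N i j = M i j))"

definition submatrix :: "(nat \<Rightarrow> nat \<Rightarrow> nat) \<Rightarrow> nat list \<Rightarrow> nat list \<Rightarrow> nat \<Rightarrow> nat \<Rightarrow> nat" where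
  "submatrix M rs cs = (\<lambda>i j. M (rs ! i) (cs ! j))"

text \<open>The entry M^n_{i,j} with 1-based indices as in the paper.\<close>
definition Mn_entry :: "nat \<Rightarrow> nat \<Rightarrow> nat \<Rightarrow> nat" where
  "Mn_entry n i j =
     (if i = j then 0
      else if j = i + 1 then 1
      else if i = n \<and> j = 1 then 1
      else if j \<ge> i + 2 then 3
      else if j = 1 \<and> 2 \<le> i \<and> i \<le> n - 1 then 4
      else 2)"

definition Mn :: "nat \<Rightarrow> nat \<Rightarrow> nat \<Rightarrow> nat" where
  "Mn n = (\<lambda>i j. Mn_entry n (i + 1) (j + 1))"

end

theory Submission
  imports Complex_Main Defs "HOL-Combinatorics.Transposition"
begin

text \<open>Every row and every column of \<open>M\<^sup>n\<close> contains exactly one 0 and one 1, so exchanging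
  the values 0 and 1 preserves all structure vectors; hence \<open>M\<^sup>n\<close> is not weak lonesum.

  For the submatrices we use potentials: if there are weights \<open>a k i\<close>, \<open>b k j\<close> such that
  every entry \<open>A i j\<close> is the unique maximiser of \<open>a k i + b k j\<close> over the values \<open>k\<close>, then the
  total weight \<open>\<Sum>i j. a (X i j) i + b (X i j) j\<close> of a matrix \<open>X\<close> depends only on its structure
  vectors and is strictly maximal at \<open>X = A\<close>, so \<open>A\<close> is weak lonesum. In \<open>M\<^sup>n\<close> the 0s and
  1s link the rows and columns into one cycle of length \<open>2n\<close> (row \<open>x\<close> meets column \<open>x\<close> in a 0
  and column \<open>x + 1 mod n\<close> in a 1). A deleted row or column cuts this cycle into a path, and the
  position along the path decides between 0 and 1; linear weights with large penalties place the
  entries 2, 3 and 4.\<close>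

lemma struct_vec_nth: "k < q \<Longrightarrow> struct_vec q n v ! k = card {l. l < n \<and> v l = k}"
  by (simp add: struct_vec_def)

lemma sum_eq_struct_vec:
  fixes f :: "nat \<Rightarrow> 'a::comm_semiring_1"
  assumes "\<forall>l<n. v l < q"
  shows "(\<Sum>l<n. f (v l)) = (\<Sum>k<q. of_nat (struct_vec q n v ! k) * f k)"
proof -
  have "(\<Sum>l<n. f (v l)) = (\<Sum>k<q. \<Sum>l\<in>{l. l \<in> {..<n} \<and> v l = k}. f (v l))"
    using assms by (intro sum.group [symmetric]) auto
  also have "\<dots> = (\<Sum>k<q. of_nat (struct_vec q n v ! k) * f k)"
    by (intro sum.cong) (auto simp: struct_vec_nth)
  finally show ?thesis .
qed

definition potential_weight ::
    "nat \<Rightarrow> nat \<Rightarrow> (nat \<Rightarrow> nat \<Rightarrow> 'a::comm_monoid_add) \<Rightarrow> (nat \<Rightarrow> nat \<Rightarrow> 'a)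
      \<Rightarrow> (nat \<Rightarrow> nat \<Rightarrow> nat) \<Rightarrow> 'a" where
  "potential_weight m w a b X = (\<Sum>i<m. \<Sum>j<w. a (X i j) i + b (X i j) j)"

lemma potential_weight_struct:
  fixes a b :: "nat \<Rightarrow> nat \<Rightarrow> 'a::comm_semiring_1"
  assumes "qary_matrix q m w X"
  shows "potential_weight m w a b X =
    (\<Sum>i<m. \<Sum>k<q. of_nat (row_struct q w X i ! k) * a k i) +
    (\<Sum>j<w. \<Sum>k<q. of_nat (col_struct q m X j ! k) * b k j)"
proof -
  have "potential_weight m w a b X = (\<Sum>i<m. \<Sum>j<w. a (X i j) i) + (\<Sum>j<w. \<Sum>i<m. b (X i j) j)"
    unfolding potential_weight_def by (simp add: sum.distrib sum.swap [of _ "{..<w}"])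
  also have "\<dots> = (\<Sum>i<m. \<Sum>k<q. of_nat (row_struct q w X i ! k) * a k i) +
      (\<Sum>j<w. \<Sum>k<q. of_nat (col_struct q m X j ! k) * b k j)"
    using assms unfolding qary_matrix_def row_struct_def col_struct_def
    by (intro arg_cong2 [where f = "(+)"] sum.cong refl sum_eq_struct_vec) auto
  finally show ?thesis .
qed

lemma potential_weight_eq_if_same_structure:
  fixes a b :: "nat \<Rightarrow> nat \<Rightarrow> 'a::comm_semiring_1"
  assumes "qary_matrix q m w N" "qary_matrix q m w A"
    and "\<forall>i<m. row_struct q w N i = row_struct q w A i"
    and "\<forall>j<w. col_struct q m N j = col_struct q m A j"
  shows "potential_weight m w a b N = potential_weight m w a b A"
  using assms by (simp add: potential_weight_struct)

definition strict_potential ::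
    "nat \<Rightarrow> nat \<Rightarrow> nat \<Rightarrow> (nat \<Rightarrow> nat \<Rightarrow> 'a::{plus,ord}) \<Rightarrow> (nat \<Rightarrow> nat \<Rightarrow> 'a)
      \<Rightarrow> (nat \<Rightarrow> nat \<Rightarrow> nat) \<Rightarrow> bool" where
  "strict_potential q m w a b A \<longleftrightarrow>
     (\<forall>i<m. \<forall>j<w. \<forall>k<q. k \<noteq> A i j \<longrightarrow> a k i + b k j < a (A i j) i + b (A i j) j)"

lemma potential_weight_less:
  fixes a b :: "nat \<Rightarrow> nat \<Rightarrow> 'a::ordered_cancel_comm_monoid_add"
  assumes "strict_potential q m w a b A" "qary_matrix q m w N"
    and "i0 < m" "j0 < w" "N i0 j0 \<noteq> A i0 j0"
  shows "potential_weight m w a b N < potential_weight m w a b A"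
proof -
  have le: "a (N i j) i + b (N i j) j \<le> a (A i j) i + b (A i j) j" if "i < m" "j < w" for i j
    using assms(1,2) that unfolding strict_potential_def qary_matrix_def
    by (cases "N i j = A i j") (auto intro: less_imp_le)
  have lt: "a (N i0 j0) i0 + b (N i0 j0) j0 < a (A i0 j0) i0 + b (A i0 j0) j0"
    using assms unfolding strict_potential_def qary_matrix_def by auto
  have "(\<Sum>j<w. a (N i0 j) i0 + b (N i0 j) j) < (\<Sum>j<w. a (A i0 j) i0 + b (A i0 j) j)"
    using le lt assms(3,4) by (intro sum_strict_mono_ex1) auto
  then show ?thesis
    unfolding potential_weight_def using le assms(3)
    by (intro sum_strict_mono_ex1) (auto intro: sum_mono)
qed

theorem weak_lonesum_if_strict_potential:
  fixes a b :: "nat \<Rightarrow> nat \<Rightarrow> 'a::linordered_idom"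
  assumes "qary_matrix q m w A" "strict_potential q m w a b A"
  shows "weak_lonesum q m w A"
  unfolding weak_lonesum_def
proof (intro conjI allI impI assms(1))
  fix N i j
  assume N: "qary_matrix q m w N \<and> (\<forall>i<m. row_struct q w N i = row_struct q w A i)
      \<and> (\<forall>j<w. col_struct q m N j = col_struct q m A j)" and "i < m" "j < w"
  show "N i j = A i j"
  proof (rule ccontr)
    assume "N i j \<noteq> A i j"
    then have "potential_weight m w a b N < potential_weight m w a b A"
      using potential_weight_less assms(2) N \<open>i < m\<close> \<open>j < w\<close> by blast
    then show False
      using potential_weight_eq_if_same_structure [of q m w N A a b] N assms(1) by simp
  qed
qed

lemma struct_vec_transpose:
  assumes "card {l. l < n \<and> v l = u} = card {l. l < n \<and> v l = u'}"
  shows "struct_vec q n (transpose u u' \<circ> v) = struct_vec q n v"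
proof -
  have "card {l. l < n \<and> transpose u u' (v l) = k} = card {l. l < n \<and> v l = k}" for k
  proof -
    have "{l. l < n \<and> transpose u u' (v l) = k} = {l. l < n \<and> v l = transpose u u' k}"
      by (metis transpose_involutory)
    then show ?thesis
      using assms by (auto simp: transpose_def)
  qed
  then show ?thesis
    by (simp add: struct_vec_def)
qed

theorem not_weak_lonesum_if_balanced:
  assumes "qary_matrix q m w A" "u < q" "u' < q" "u \<noteq> u'"
    and rows: "\<forall>i<m. card {j. j < w \<and> A i j = u} = card {j. j < w \<and> A i j = u'}"
    and cols: "\<forall>j<w. card {i. i < m \<and> A i j = u} = card {i. i < m \<and> A i j = u'}"
    and "i0 < m" "j0 < w" "A i0 j0 = u"
  shows "\<not> weak_lonesum q m w A"
proof
  define N where "N i j = transpose u u' (A i j)" for i j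
  assume "weak_lonesum q m w A"
  moreover have "qary_matrix q m w N"
    using assms(1-3) by (auto simp: qary_matrix_def N_def transpose_def)
  moreover have "\<forall>i<m. row_struct q w N i = row_struct q w A i"
    using rows struct_vec_transpose [where v = "A _"] by (simp add: row_struct_def N_def comp_def)
  moreover have "\<forall>j<w. col_struct q m N j = col_struct q m A j"
    using cols struct_vec_transpose [where v = "\<lambda>i. A i _"] by (simp add: col_struct_def N_def comp_def)
  ultimately have "N i0 j0 = A i0 j0"
    using assms(7,8) unfolding weak_lonesum_def by blast
  with assms(4,9) show False
    by (simp add: N_def)
qed

lemma Mn_eq:
  assumes "x < n" "y < n"
  shows "Mn n x y =
    (if y = x then 0 else if y = Suc x mod n then 1 else if x + 2 \<le> y then 3 else if y = 0 then 4 else 2)"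
  using assms by (auto simp: Mn_def Mn_entry_def mod_Suc)

lemma Mn_less_5: "Mn n x y < 5"
  by (simp add: Mn_def Mn_entry_def)

lemma Mn_eq_0_iff: "x < n \<Longrightarrow> y < n \<Longrightarrow> Mn n x y = 0 \<longleftrightarrow> y = x"
  by (simp add: Mn_eq)

lemma Mn_eq_1_iff:
  assumes "x < n" "y < n" "n \<ge> 2"
  shows "Mn n x y = 1 \<longleftrightarrow> y = Suc x mod n"
  using assms by (auto simp: Mn_eq mod_Suc)

lemma card_Mn_row:
  assumes "x < n" "n \<ge> 2"
  shows "card {y. y < n \<and> Mn n x y = 0} = 1" "card {y. y < n \<and> Mn n x y = 1} = 1"
proof -
  have "{y. y < n \<and> Mn n x y = 0} = {x}" "{y. y < n \<and> Mn n x y = 1} = {Suc x mod n}"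
    using assms by (auto simp: Mn_eq_0_iff Mn_eq_1_iff [simplified])
  then show "card {y. y < n \<and> Mn n x y = 0} = 1" "card {y. y < n \<and> Mn n x y = 1} = 1"
    by simp_all
qed

lemma card_Mn_col:
  assumes "y < n" "n \<ge> 2"
  shows "card {x. x < n \<and> Mn n x y = 0} = 1" "card {x. x < n \<and> Mn n x y = 1} = 1"
proof -
  have "{x. x < n \<and> Mn n x y = 0} = {y}" "{x. x < n \<and> Mn n x y = 1} = {if y = 0 then n - 1 else y - 1}"
    using assms by (auto simp: Mn_eq_0_iff Mn_eq_1_iff [simplified] mod_Suc split: if_splits)
  then show "card {x. x < n \<and> Mn n x y = 0} = 1" "card {x. x < n \<and> Mn n x y = 1} = 1"
    by simp_all
qed

lemma not_weak_lonesum_Mn: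
  assumes "n \<ge> 2"
  shows "\<not> weak_lonesum 5 n n (Mn n)"
proof (rule not_weak_lonesum_if_balanced [where u' = 1])
  show "qary_matrix 5 n n (Mn n)"
    by (simp add: qary_matrix_def Mn_less_5)
  show "Mn n 0 0 = 0"
    using assms by (simp add: Mn_eq)
  show "\<forall>i<n. card {j. j < n \<and> Mn n i j = 0} = card {j. j < n \<and> Mn n i j = 1}"
    using assms card_Mn_row by simp
  show "\<forall>j<n. card {i. i < n \<and> Mn n i j = 0} = card {i. i < n \<and> Mn n i j = 1}"
    using assms card_Mn_col by simp
qed (use assms in auto)

text \<open>The positions \<open>0, \<dots>, N - 1\<close> form a cycle; \<open>cycle_rank N p v\<close> is the rank of \<open>v\<close> on the
  path obtained by cutting this cycle between \<open>p\<close> and \<open>p + 1\<close>.\<close>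

definition cycle_rank :: "nat \<Rightarrow> nat \<Rightarrow> nat \<Rightarrow> nat" where
  "cycle_rank N p v = (v + (N - Suc p)) mod N"

lemma cycle_rank_less: "0 < N \<Longrightarrow> cycle_rank N p v < N"
  by (simp add: cycle_rank_def)

lemma cycle_rank_Suc:
  assumes "v < N" "p < N" "v \<noteq> p"
  shows "cycle_rank N p (Suc v mod N) = Suc (cycle_rank N p v)"
proof -
  have "Suc ((v + (N - Suc p)) mod N) \<noteq> N"
  proof (cases "v < p")
    case True
    then show ?thesis using assms by simp
  next
    case False
    then have "v + (N - Suc p) = (v - Suc p) + N" using assms by simp
    then have "(v + (N - Suc p)) mod N = v - Suc p"
      using assms by (metis mod_add_self2 mod_less less_imp_diff_less)
    then show ?thesis using assms by linarith
  qed
  moreover have "(Suc v mod N + (N - Suc p)) mod N = Suc (v + (N - Suc p)) mod N"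
    by (simp add: mod_add_left_eq)
  ultimately show ?thesis
    unfolding cycle_rank_def by (simp only: mod_Suc) simp
qed

text \<open>Column \<open>y\<close> sits at position \<open>2 y\<close> and row \<open>x\<close> at position \<open>2 x + 1\<close> of a cycle of length
  \<open>2 n\<close>, and \<open>p\<close> is a position of a deleted row or column. The weight of the value 1 is scaled
  into \<open>(-1, 1)\<close>, so that it never outweighs the integral gaps between the other values and
  only decides between 0 and 1.\<close>

definition Mn_row_potential :: "nat \<Rightarrow> nat \<Rightarrow> nat \<Rightarrow> nat \<Rightarrow> real" where
  "Mn_row_potential n p k x =
     (if k = 0 then 0
      else if k = 1 then - cycle_rank (2 * n) p (2 * x + 1) / (2 * n)
      else if k = 2 then 2 * x
      else if k = 3 then - 2 * x
      else if 0 < x \<and> x + 2 \<le> n then 2 else - 4 * n)"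

definition Mn_col_potential :: "nat \<Rightarrow> nat \<Rightarrow> nat \<Rightarrow> nat \<Rightarrow> real" where
  "Mn_col_potential n p k y =
     (if k = 0 then 0
      else if k = 1 then cycle_rank (2 * n) p (2 * y) / (2 * n)
      else if k = 2 then (if y = 0 then - 4 * n else - 2 * y - 1)
      else if k = 3 then 2 * y - 3
      else if y = 0 then 0 else - 4 * n)"

lemma Mn_potential_strict:
  assumes "n \<ge> 3" "x < n" "y < n" "p < 2 * n" "p \<noteq> 2 * x + 1" "p \<noteq> 2 * y"
    and "k < 5" "k \<noteq> Mn n x y"
  shows "Mn_row_potential n p k x + Mn_col_potential n p k y
    < Mn_row_potential n p (Mn n x y) x + Mn_col_potential n p (Mn n x y) y"
proof -
  define sc where "sc k = Mn_row_potential n p k x + Mn_col_potential n p k y" for k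
  define r where "r v = real (cycle_rank (2 * n) p v)" for v
  have sc1: "sc 1 = (r (2 * y) - r (2 * x + 1)) / (2 * n)"
    by (simp add: sc_def r_def Mn_row_potential_def Mn_col_potential_def diff_divide_distrib)
  have r_bounds: "0 \<le> r v \<and> r v < 2 * n" for v
    using assms(1) cycle_rank_less [of "2 * n" p v] by (simp add: r_def)
  have "\<bar>r (2 * y) - r (2 * x + 1)\<bar> < 2 * n"
    using r_bounds [of "2 * y"] r_bounds [of "2 * x + 1"] by linarith
  then have sc1_bounds: "-1 < sc 1" "sc 1 < 1"
    unfolding sc1 using assms(1) by (simp_all add: divide_simps abs_less_iff)
  have sc1_diag: "sc 1 < 0" if "y = x"
  proof -
    have "Suc (2 * x) mod (2 * n) = 2 * x + 1"
      using assms(2) by simp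
    then have "r (2 * x + 1) = r (2 * y) + 1"
      using cycle_rank_Suc [of "2 * x" "2 * n" p] assms that by (simp add: r_def)
    then show ?thesis
      unfolding sc1 using assms(1) by (simp add: divide_simps)
  qed
  have sc1_succ: "0 < sc 1" if "y = Suc x mod n"
  proof -
    have "2 * y = Suc (2 * x + 1) mod (2 * n)"
      using that by (simp add: mod_mult_mult1 [symmetric])
    then have "r (2 * y) = r (2 * x + 1) + 1"
      using cycle_rank_Suc [of "2 * x + 1" "2 * n" p] assms by (simp add: r_def)
    then show ?thesis
      unfolding sc1 using assms(1) by (simp add: divide_simps)
  qed
  have sc0: "sc 0 = 0"
    by (simp add: sc_def Mn_row_potential_def Mn_col_potential_def)
  have sc2: "sc 2 = (if y = 0 then 2 * real x - 4 * n else 2 * real x - 2 * y - 1)"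
    by (simp add: sc_def Mn_row_potential_def Mn_col_potential_def)
  have sc3: "sc 3 = 2 * real y - 2 * x - 3"
    by (simp add: sc_def Mn_row_potential_def Mn_col_potential_def)
  have sc4: "sc 4 = (if 0 < x \<and> x + 2 \<le> n then 2 else - 4 * real n) + (if y = 0 then 0 else - 4 * real n)"
    by (simp add: sc_def Mn_row_potential_def Mn_col_potential_def)
  have "k = 0 \<or> k = 1 \<or> k = 2 \<or> k = 3 \<or> k = 4"
    using assms(7) by linarith
  then have "sc k < sc (Mn n x y)"
    using assms(1-3,8) sc0 sc1_bounds sc1_diag sc1_succ sc2 sc3 sc4
    by (elim disjE; simp add: Mn_eq mod_Suc split: if_splits; linarith)
  then show ?thesis
    by (simp add: sc_def)
qed

lemma ex_less_notin_set: "length xs < n \<Longrightarrow> \<exists>r<n. r \<notin> set xs"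
proof (rule ccontr)
  assume "length xs < n" "\<not> (\<exists>r<n. r \<notin> set xs)"
  then have "card {..<n} \<le> card (set xs)"
    by (intro card_mono) auto
  with \<open>length xs < n\<close> show False
    using card_length [of xs] by simp
qed

lemma weak_lonesum_submatrix_Mn:
  assumes "n \<ge> 3" "\<forall>r\<in>set rs. r < n" "\<forall>c\<in>set cs. c < n"
    and "(\<exists>r<n. r \<notin> set rs) \<or> (\<exists>c<n. c \<notin> set cs)"
  shows "weak_lonesum 5 (length rs) (length cs) (submatrix (Mn n) rs cs)"
proof -
  obtain p where p: "p < 2 * n" "\<forall>r\<in>set rs. p \<noteq> 2 * r + 1" "\<forall>c\<in>set cs. p \<noteq> 2 * c"
  proof -
    from assms(4) show thesis
    proof (elim disjE exE conjE)
      fix r assume "r < n" "r \<notin> set rs"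
      then show thesis
        by (intro that [of "2 * r + 1"]) (auto, presburger)
    next
      fix c assume "c < n" "c \<notin> set cs"
      then show thesis
        by (intro that [of "2 * c"]) (auto, presburger)
    qed
  qed
  show ?thesis
  proof (rule weak_lonesum_if_strict_potential)
    show "qary_matrix 5 (length rs) (length cs) (submatrix (Mn n) rs cs)"
      by (simp add: qary_matrix_def submatrix_def Mn_less_5)
    show "strict_potential 5 (length rs) (length cs)
        (\<lambda>k i. Mn_row_potential n p k (rs ! i)) (\<lambda>k j. Mn_col_potential n p k (cs ! j))
        (submatrix (Mn n) rs cs)"
      unfolding strict_potential_def submatrix_def
    proof (intro allI impI)
      fix i j k
      assume "i < length rs" "j < length cs" "k < 5" "k \<noteq> Mn n (rs ! i) (cs ! j)"
      then show "Mn_row_potential n p k (rs ! i) + Mn_col_potential n p k (cs ! j)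
          < Mn_row_potential n p (Mn n (rs ! i) (cs ! j)) (rs ! i)
            + Mn_col_potential n p (Mn n (rs ! i) (cs ! j)) (cs ! j)"
        using assms(2,3) p by (intro Mn_potential_strict [OF assms(1)]) auto
    qed
  qed
qed

theorem proposition3p8:
  fixes n :: nat
  assumes "n \<ge> 3"
  shows "\<not> weak_lonesum 5 n n (Mn n) \<and>
    (\<forall>rs cs. sorted_wrt (<) rs \<and> sorted_wrt (<) cs
       \<and> (\<forall>r\<in>set rs. r < n) \<and> (\<forall>c\<in>set cs. c < n)
       \<and> (length rs < n \<or> length cs < n)
       \<longrightarrow> weak_lonesum 5 (length rs) (length cs) (submatrix (Mn n) rs cs))"
proof (intro conjI allI impI)
  show "\<not> weak_lonesum 5 n n (Mn n)"
    using assms by (intro not_weak_lonesum_Mn) simp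
  fix rs cs :: "nat list"
  assume "sorted_wrt (<) rs \<and> sorted_wrt (<) cs \<and> (\<forall>r\<in>set rs. r < n) \<and> (\<forall>c\<in>set cs. c < n)
    \<and> (length rs < n \<or> length cs < n)"
  then show "weak_lonesum 5 (length rs) (length cs) (submatrix (Mn n) rs cs)"
    using ex_less_notin_set [of rs n] ex_less_notin_set [of cs n]
    by (intro weak_lonesum_submatrix_Mn [OF assms]) auto
qed

end
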